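(* Let $p\ge1$ and let $F:\mathbb{R}\to E^p$ be $D$-continuous. Then for every compact set $U\subset\mathbb{R}$, the set $F(U)=\{F(t): t\in U\}$ is uniformly-support-bounded, i.e. there is a compact set $K\subset\mathbb{R}^p$ such that $[F(t)]_0\subset K$ for all $t\in U$.
   Context: A fuzzy subset of $\mathbb{R}^p$ is a function $u:\mathbb{R}^p\to[0,1]$. Its $\alpha$-cut is $[u]_\alpha=\{x\in\mathbb{R}^p: u(x)\ge\alpha\}$ for $\alpha\in(0,1]$, and $[u]_0=\overline{\{x\in\mathbb{R}^p: u(x)>0\}}$. The set $E^p$ of $p$-dimensional fuzzy numbers consists of all fuzzy subsets $u$ of $\mathbb{R}^p$ such that $[u]_\alpha$ is a nonempty compact convex subset of $\mathbb{R}^p$ for every $\alpha\in[0,1]$. The sendograph of $u\in E^p$ is $\mathrm{send}\,u=\{(x,\alpha)\in[u]_0\times[0,1]: u(x)\ge\alpha\}\subset\mathbb{R}^{p+1}$. For nonempty compact $U,V\subset\mathbb{R}^{p+1}$ (with the Euclidean metric $d$), the Hausdorff metric is $H(U,V)=\max\{H^*(U,V),H^*(V,U)\}$ with $H^*(U,V)=\sup_{a\in U}\inf_{b\in V}d(a,b)$. The sendograph metric on $E^p$ is $D(u,v)=H(\mathrm{send}\,u,\mathrm{send}\,v)$. A function $F:\mathbb{R}\to E^p$ is $D$-continuous if $\lim_{y\to x}D(F(y),F(x))=0$ for every $x\in\mathbb{R}$. *)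

theory Defs
  imports "HOL-Analysis.Analysis"
begin

text \<open>Fuzzy subsets of R^p are modelled as functions u :: 'a \<Rightarrow> real with 'a a
  Euclidean space (so p = DIM('a) \<ge> 1); values in [0,1] are required in fuzzy_number.\<close>

definition cut :: "('a::euclidean_space \<Rightarrow> real) \<Rightarrow> real \<Rightarrow> 'a set" where
  "cut u \<alpha> = (if \<alpha> = 0 then closure {x. u x > 0} else {x. u x \<ge> \<alpha>})"

definition fuzzy_number :: "('a::euclidean_space \<Rightarrow> real) \<Rightarrow> bool" where
  "fuzzy_number u \<longleftrightarrow> (\<forall>x. 0 \<le> u x \<and> u x \<le> 1) \<and>
     (\<forall>\<alpha>\<in>{0..1}. cut u \<alpha> \<noteq> {} \<and> compact (cut u \<alpha>) \<and> convex (cut u \<alpha>))"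

text \<open>Sendograph, a subset of R^p \<times> R = R^(p+1) (the product metric on 'a \<times> real is Euclidean).\<close>
definition send :: "('a::euclidean_space \<Rightarrow> real) \<Rightarrow> ('a \<times> real) set" where
  "send u = {(x, \<alpha>). x \<in> cut u 0 \<and> \<alpha> \<in> {0..1} \<and> u x \<ge> \<alpha>}"

definition hausdorff_semi :: "'b::metric_space set \<Rightarrow> 'b set \<Rightarrow> real" where
  "hausdorff_semi U V = (SUP a\<in>U. INF b\<in>V. dist a b)"

definition hausdorff :: "'b::metric_space set \<Rightarrow> 'b set \<Rightarrow> real" where
  "hausdorff U V = max (hausdorff_semi U V) (hausdorff_semi V U)"

definition sendograph_metric :: "('a::euclidean_space \<Rightarrow> real) \<Rightarrow> ('a \<Rightarrow> real) \<Rightarrow> real" where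
  "sendograph_metric u v = hausdorff (send u) (send v)"

end

theory Submission
  imports Defs
begin

text \<open>The support radius r(u) = max {norm x | x \<in> [u]_0} satisfies
  \<bar>r(v) - r(u)\<bar> \<le> D(u,v): every (z,0) in the sendograph of v lies within D(u,v) + \<epsilon> of
  some (w,\<alpha>) in the sendograph of u, and then norm z \<le> norm w + dist z w.
  Hence t \<mapsto> r(F t) is continuous, bounded on the compact set U by some M, and
  K = cball 0 M works.\<close>

lemma send_subset_Times: "send u \<subseteq> cut u 0 \<times> {0..1}"
  unfolding send_def by auto

lemma bounded_send:
  assumes "fuzzy_number u" shows "bounded (send u)"
proof -
  have "compact (cut u 0)" using assms unfolding fuzzy_number_def by auto
  then have "compact (cut u 0 \<times> {0..(1::real)})" by (intro compact_Times compact_Icc)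
  then show ?thesis
    using send_subset_Times compact_imp_bounded bounded_subset by blast
qed

lemma zero_level_in_send:
  assumes "fuzzy_number u" "z \<in> cut u 0" shows "(z, 0) \<in> send u"
  using assms unfolding fuzzy_number_def send_def by auto

lemma send_nonempty:
  assumes "fuzzy_number u" shows "send u \<noteq> {}"
proof -
  obtain z where "z \<in> cut u 0" using assms unfolding fuzzy_number_def by fastforce
  then show ?thesis using zero_level_in_send[OF assms] by blast
qed

lemma hausdorff_semi_less_imp_close:
  fixes U V :: "'b::metric_space set"
  assumes "a \<in> U" "bounded U" "V \<noteq> {}" "hausdorff_semi U V < e"
  shows "\<exists>b\<in>V. dist a b < e"
proof -
  obtain b0 where b0: "b0 \<in> V" using assms(3) by auto
  obtain c r where cr: "\<forall>x\<in>U. dist c x \<le> r" using assms(2) unfolding bounded_def by auto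
  have bdd_V: "bdd_below ((\<lambda>b. dist x b) ` V)" for x
    by (auto intro: bdd_belowI2[where m = 0])
  have "bdd_above ((\<lambda>a. INF b\<in>V. dist a b) ` U)"
  proof (rule bdd_aboveI2)
    fix x assume x: "x \<in> U"
    have "(INF b\<in>V. dist x b) \<le> dist x b0"
      by (rule cINF_lower[OF bdd_V b0])
    also have "\<dots> \<le> dist c x + dist c b0" by (metis dist_commute dist_triangle)
    also have "\<dots> \<le> r + dist c b0" using cr x by auto
    finally show "(INF b\<in>V. dist x b) \<le> r + dist c b0" .
  qed
  then have "(INF b\<in>V. dist a b) \<le> hausdorff_semi U V"
    unfolding hausdorff_semi_def using assms(1) by (rule cSUP_upper2) auto
  with assms(4) have "(INF b\<in>V. dist a b) < e" by linarith
  then show ?thesis using cINF_less_iff[OF assms(3) bdd_V] by auto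
qed

lemma sendograph_metric_commute: "sendograph_metric u v = sendograph_metric v u"
  unfolding sendograph_metric_def hausdorff_def by (simp add: max.commute)

lemma support_close_if_sendograph_metric_less:
  assumes u: "fuzzy_number u" and v: "fuzzy_number v"
    and less: "sendograph_metric v u < e" and z: "z \<in> cut v 0"
  shows "\<exists>w\<in>cut u 0. dist z w < e"
proof -
  have "hausdorff_semi (send v) (send u) < e"
    using less unfolding sendograph_metric_def hausdorff_def by auto
  then obtain b where b: "b \<in> send u" "dist (z, 0::real) b < e"
    using hausdorff_semi_less_imp_close[OF zero_level_in_send[OF v z] bounded_send[OF v]
        send_nonempty[OF u]] by blast
  obtain w \<alpha> where b_eq: "b = (w, \<alpha>)" by (cases b)
  have "w \<in> cut u 0" using b(1) b_eq unfolding send_def by auto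
  moreover have "dist z w < e"
    using b(2) b_eq dist_fst_le[of "(z, 0::real)" b] by simp
  ultimately show ?thesis by blast
qed

definition support_radius :: "('a::euclidean_space \<Rightarrow> real) \<Rightarrow> real" where
  "support_radius u = (SUP x\<in>cut u 0. norm x)"

lemma norm_le_support_radius:
  assumes "fuzzy_number u" "x \<in> cut u 0"
  shows "norm x \<le> support_radius u"
proof -
  have "compact (cut u 0)" using assms(1) unfolding fuzzy_number_def by auto
  then have "bounded (cut u 0)" by (rule compact_imp_bounded)
  then have "bdd_above (norm ` cut u 0)"
    by (simp add: bounded_imp_bdd_above bounded_norm_comp)
  then show ?thesis
    unfolding support_radius_def by (rule cSUP_upper[OF assms(2)])
qed

lemma support_subset_cball_radius:
  assumes "fuzzy_number u" shows "cut u 0 \<subseteq> cball 0 (support_radius u)"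
  using norm_le_support_radius[OF assms] by auto

lemma support_radius_le:
  assumes "fuzzy_number u" "\<And>x. x \<in> cut u 0 \<Longrightarrow> norm x \<le> R"
  shows "support_radius u \<le> R"
  using assms unfolding support_radius_def fuzzy_number_def by (intro cSUP_least) auto

lemma support_radius_le_add_sendograph_metric:
  assumes u: "fuzzy_number u" and v: "fuzzy_number v"
  shows "support_radius v \<le> support_radius u + sendograph_metric v u"
proof (rule support_radius_le[OF v], rule field_le_epsilon)
  fix z :: 'a and \<epsilon> :: real
  assume z: "z \<in> cut v 0" and "0 < \<epsilon>"
  then have "sendograph_metric v u < sendograph_metric v u + \<epsilon>" by simp
  then obtain w where w: "w \<in> cut u 0" "dist z w < sendograph_metric v u + \<epsilon>"
    using support_close_if_sendograph_metric_less[OF u v _ z] by blast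
  have "norm z \<le> norm w + dist z w"
    using norm_triangle_ineq[of "z - w" w] by (simp add: dist_norm)
  with w norm_le_support_radius[OF u w(1)]
  show "norm z \<le> support_radius u + sendograph_metric v u + \<epsilon>" by linarith
qed

lemma support_radius_dist_le_sendograph_metric:
  assumes "fuzzy_number u" "fuzzy_number v"
  shows "\<bar>support_radius v - support_radius u\<bar> \<le> sendograph_metric v u"
  using support_radius_le_add_sendograph_metric[OF assms]
    support_radius_le_add_sendograph_metric[OF assms(2,1)]
  by (simp add: sendograph_metric_commute abs_le_iff)

lemma isCont_support_radius:
  assumes fuzzy: "\<forall>t. fuzzy_number (F t)"
    and cont: "((\<lambda>y. sendograph_metric (F y) (F x)) \<longlongrightarrow> 0) (at x)"
  shows "isCont (\<lambda>t. support_radius (F t)) x"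
proof -
  have "norm (support_radius (F y) - support_radius (F x)) \<le> sendograph_metric (F y) (F x)" for y
    using support_radius_dist_le_sendograph_metric[OF fuzzy[rule_format] fuzzy[rule_format]]
    by simp
  then have "((\<lambda>y. support_radius (F y) - support_radius (F x)) \<longlongrightarrow> 0) (at x)"
    by (intro Lim_null_comparison[OF always_eventually cont]) blast
  then show ?thesis unfolding isCont_def by (rule LIM_zero_cancel)
qed

theorem theorem2p2:
  fixes F :: "real \<Rightarrow> ('a::euclidean_space \<Rightarrow> real)"
    and U :: "real set"
  assumes fuzzy: "\<forall>t. fuzzy_number (F t)"
    and cont: "\<forall>x. ((\<lambda>y. sendograph_metric (F y) (F x)) \<longlongrightarrow> 0) (at x)"
    and U: "compact U"
  shows "\<exists>K::'a set. compact K \<and> (\<forall>t\<in>U. cut (F t) 0 \<subseteq> K)"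
proof -
  have "continuous_on U (\<lambda>t. support_radius (F t))"
    by (intro continuous_at_imp_continuous_on ballI isCont_support_radius[OF fuzzy]
        cont[rule_format])
  then have "bounded ((\<lambda>t. support_radius (F t)) ` U)"
    by (rule compact_imp_bounded[OF compact_continuous_image[OF _ U]])
  then obtain M where M: "\<And>t. t \<in> U \<Longrightarrow> support_radius (F t) \<le> M"
    unfolding bounded_real by (meson abs_le_D1 imageI)
  have "cut (F t) 0 \<subseteq> cball 0 M" if "t \<in> U" for t
    using support_subset_cball_radius[OF fuzzy[rule_format]] subset_cball[OF M[OF that]]
    by (rule order.trans)
  then show ?thesis using compact_cball by blast
qed

end
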